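(* Let $q>3$ and $\phi\in\Phi_q$. Then: (i) for all $e<0$, $a_\phi(e)=\frac{4\pi}{3}\int_{\mathbb{R}^3}\big((1+e-\phi(x))_+^2-1\big)_+^{3/2}dx$ (finite); (ii) $a_\phi$ is $C^1$ on $(-\infty,0)$, and is a strictly increasing $C^1$ diffeomorphism from $(\inf\phi,0)$ onto $(0,+\infty)$ (where $\inf\phi$ is the essential infimum), whose inverse is denoted $a_\phi^{-1}$. Moreover there exist positive constants $C,\tilde C$ (depending only on $q$) such that for all $e<0$ and $s>0$, $$a_\phi(e)\le\frac{C}{|e|^{q-3}}\Big(1+\frac{1}{|e|^3}\Big)\|\phi\|_{L^q}^q,\qquad a_\phi^{-1}(s)\ge-\tilde C\left(\frac{\|\phi\|_{L^q}^{q/(q-3)}}{s^{1/(q-3)}}+\frac{\|\phi\|_{L^q}}{s^{1/q}}\right).$$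
   Context: For $q>3$, $\Phi_q=\{\phi\in L^q(\mathbb{R}^3):\ \phi\le0,\ m(\phi)>0,\ \nabla\phi\in L^2(\mathbb{R}^3),\ \lim_{|x|\to\infty}\phi(x)=0\}$ with $m(\phi)=\inf_{x}(1+|x|)|\phi(x)|$. For $\phi\in\Phi_q$ and $e<0$, $a_\phi(e)=\mathrm{meas}\{(x,v)\in\mathbb{R}^6:\ \sqrt{1+|v|^2}-1+\phi(x)<e\}$. *)

theory Defs
  imports "HOL-Analysis.Analysis" "HOL-Probability.Essential_Supremum"
begin

type_synonym R3 = "real^3"

definition partial_d :: "3 \<Rightarrow> (R3 \<Rightarrow> real) \<Rightarrow> R3 \<Rightarrow> real" where
  "partial_d i f x = frechet_derivative f (at x) (axis i 1)"

fun Ck_fun :: "nat \<Rightarrow> (R3 \<Rightarrow> real) \<Rightarrow> bool" where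
  "Ck_fun 0 f = continuous_on UNIV f"
| "Ck_fun (Suc k) f = ((\<forall>x. f differentiable (at x)) \<and> continuous_on UNIV f \<and>
                        (\<forall>i. Ck_fun k (partial_d i f)))"

definition test_fun :: "(R3 \<Rightarrow> real) \<Rightarrow> bool" where
  "test_fun \<psi> \<longleftrightarrow> (\<forall>k. Ck_fun k \<psi>) \<and> compact (closure {x. \<psi> x \<noteq> 0})"

definition in_Lp :: "real \<Rightarrow> (R3 \<Rightarrow> real) \<Rightarrow> bool" where
  "in_Lp p f \<longleftrightarrow> f \<in> borel_measurable lborel \<and> integrable lborel (\<lambda>x. \<bar>f x\<bar> powr p)"

definition Lp_norm :: "real \<Rightarrow> (R3 \<Rightarrow> real) \<Rightarrow> real" where
  "Lp_norm p f = (\<integral>x. \<bar>f x\<bar> powr p \<partial>lborel) powr (1/p)"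

definition weak_grad_L2 :: "(R3 \<Rightarrow> real) \<Rightarrow> bool" where
  "weak_grad_L2 \<phi> \<longleftrightarrow> (\<exists>g :: 3 \<Rightarrow> R3 \<Rightarrow> real. \<forall>i.
      in_Lp 2 (g i) \<and>
      (\<forall>\<psi>. test_fun \<psi> \<longrightarrow>
          (\<integral>x. \<phi> x * partial_d i \<psi> x \<partial>lborel) = - (\<integral>x. g i x * \<psi> x \<partial>lborel)))"

definition m_inf :: "(R3 \<Rightarrow> real) \<Rightarrow> real" where
  "m_inf \<phi> = (INF x. (1 + norm x) * \<bar>\<phi> x\<bar>)"

definition Phi_q :: "real \<Rightarrow> (R3 \<Rightarrow> real) set" where
  "Phi_q q = {\<phi>. in_Lp q \<phi> \<and> (\<forall>x. \<phi> x \<le> 0) \<and> m_inf \<phi> > 0 \<and> weak_grad_L2 \<phi> \<and>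
               (\<phi> \<longlongrightarrow> 0) at_infinity}"

definition a_set :: "(R3 \<Rightarrow> real) \<Rightarrow> real \<Rightarrow> (R3 \<times> R3) set" where
  "a_set \<phi> e = {(x, v). sqrt (1 + (norm v)\<^sup>2) - 1 + \<phi> x < e}"

definition a_phi :: "(R3 \<Rightarrow> real) \<Rightarrow> real \<Rightarrow> real" where
  "a_phi \<phi> e = measure lborel (a_set \<phi> e)"

definition ess_inf :: "(R3 \<Rightarrow> real) \<Rightarrow> ereal" where
  "ess_inf \<phi> = - esssup lborel (\<lambda>x. ereal (- \<phi> x))"

end

theory Submission
  imports Defs
begin

(* Integrating out the velocity, the fibre of a_set \<phi> e over x is the ball of radius
   ((1 + e - \<phi> x)\<^sub>+\<^sup>2 - 1)\<^sub>+\<^sup>1\<^sup>/\<^sup>2, so a_phi \<phi> e = 4\<pi>/3 \<integral> kin_vol (e - \<phi> x) dx.  kin_vol is C\<^sup>1,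
   nondecreasing, vanishes exactly on t \<le> 0, and for e < 0 it is bounded by a multiple of |\<phi>|^q
   depending only on e.  This gives integrability, the L^q bound, and (by dominated convergence)
   differentiation under the integral sign, with a derivative that is positive exactly when e
   exceeds the essential infimum of \<phi>.  By the L^q bound a_phi \<phi> is small as e \<rightarrow> -\<infinity>, while the
   decay |\<phi> x| \<ge> m/(1 + |x|) makes the phase-space set at level -\<delta>\<^sup>2 contain a product of balls of
   radii \<approx> m/\<delta>\<^sup>2 and \<delta>, of volume \<approx> m\<^sup>3/\<delta>\<^sup>3; the intermediate value theorem then gives
   surjectivity.  Inverting the L^q bound bounds the inverse from below. *)

definition kin_vol :: "real \<Rightarrow> real" where
  "kin_vol t = (max 0 ((max 0 (1 + t))\<^sup>2 - 1)) powr (3/2)"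

definition kin_vol_deriv :: "real \<Rightarrow> real" where
  "kin_vol_deriv t = 3 * sqrt (max 0 t * (2 + max 0 t)) * (1 + max 0 t)"

lemma powr_three_halves:
  fixes x :: real
  assumes "x \<ge> 0"
  shows "x powr (3/2) = x * sqrt x"
proof -
  have "x powr (1 + 1/2) = x powr 1 * x powr (1/2)" by (rule powr_add)
  then show ?thesis using assms by (cases "x = 0") (simp_all add: powr_half_sqrt)
qed

lemma kin_vol_clip: "max 0 ((max 0 (1 + (t::real)))\<^sup>2 - 1) = max 0 t * (2 + max 0 t)"
proof (cases "t \<ge> 0")
  case False
  have "(max 0 (1 + t))\<^sup>2 \<le> 1"
  proof (cases "1 + t \<ge> 0")
    case True
    have "t * (2 + t) \<le> 0" by (rule mult_nonpos_nonneg) (use False True in auto)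
    then show ?thesis using True by (simp add: power2_eq_square algebra_simps)
  qed simp
  then show ?thesis using False by simp
qed (simp add: max_def power2_eq_square algebra_simps)

lemma kin_vol_alt: "kin_vol t = (max 0 t * (2 + max 0 t)) powr (3/2)"
  by (simp add: kin_vol_def kin_vol_clip)

lemma kin_vol_eq: "kin_vol t = max 0 t * (2 + max 0 t) * sqrt (max 0 t * (2 + max 0 t))"
  by (simp add: kin_vol_alt powr_three_halves)

lemma kin_vol_eq_radius_cube: "kin_vol t = sqrt (max 0 ((max 0 (1 + t))\<^sup>2 - 1)) ^ 3"
  unfolding kin_vol_clip kin_vol_eq by (simp add: power3_eq_cube)

lemma kin_vol_nonneg: "kin_vol t \<ge> 0"
  by (simp add: kin_vol_def)

lemma kin_vol_mono: "s \<le> t \<Longrightarrow> kin_vol s \<le> kin_vol t"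
  unfolding kin_vol_eq by (intro mult_mono real_sqrt_le_mono) (auto simp: max_def)

lemma kin_vol_eq_0_iff: "kin_vol t = 0 \<longleftrightarrow> t \<le> 0"
  by (auto simp: kin_vol_eq max_def)

lemma kin_vol_deriv_nonneg: "kin_vol_deriv t \<ge> 0"
  by (simp add: kin_vol_deriv_def)

lemma kin_vol_deriv_mono: "s \<le> t \<Longrightarrow> kin_vol_deriv s \<le> kin_vol_deriv t"
  unfolding kin_vol_deriv_def by (intro mult_mono real_sqrt_le_mono) (auto simp: max_def)

lemma kin_vol_deriv_eq_0_iff: "kin_vol_deriv t = 0 \<longleftrightarrow> t \<le> 0"
  by (auto simp: kin_vol_deriv_def max_def)

lemma continuous_on_kin_vol_deriv: "continuous_on UNIV kin_vol_deriv"
  unfolding kin_vol_deriv_def by (intro continuous_intros)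

lemma kin_vol_has_real_derivative: "(kin_vol has_real_derivative kin_vol_deriv t) (at t)"
proof -
  consider "t > 0" | "t < 0" | "t = 0" by linarith
  then show ?thesis
  proof cases
    case 1
    have pos: "t * (2 + t) > 0" using 1 by simp
    have "((\<lambda>y. y * (2 + y)) has_real_derivative 2 + 2 * t) (at t)"
      by (auto intro!: derivative_eq_intros)
    from DERIV_chain2[OF has_real_derivative_powr[OF pos] this]
    have "((\<lambda>y. (y * (2 + y)) powr (3/2)) has_real_derivative
            (3/2) * (t * (2 + t)) powr (3/2 - 1) * (2 + 2 * t)) (at t)" .
    moreover have "(3/2) * (t * (2 + t)) powr (3/2 - 1) * (2 + 2 * t) = kin_vol_deriv t"
      using 1 pos by (simp add: powr_half_sqrt kin_vol_deriv_def max_def field_simps)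
    ultimately have "((\<lambda>y. (y * (2 + y)) powr (3/2)) has_real_derivative kin_vol_deriv t) (at t)"
      by simp
    then show ?thesis
      by (rule has_field_derivative_transform_within_open[where S="{0<..}"])
         (use 1 in \<open>auto simp: kin_vol_alt\<close>)
  next
    case 2
    have "((\<lambda>y. 0) has_real_derivative 0) (at t)" by simp
    then show ?thesis
      using has_field_derivative_transform_within_open[of "\<lambda>y. 0" 0 t "{..<0}" kin_vol] 2
      by (simp add: kin_vol_eq_0_iff kin_vol_deriv_def)
  next
    case 3
    \<comment> \<open>At 0 the difference quotient is squeezed by kin_vol y / y \<le> 3 (3y)^(1/2) for 0 < y < 1.\<close>
    have "((\<lambda>y. kin_vol y / y) \<longlongrightarrow> 0) (at 0)"
    proof (rule Lim_null_comparison)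
      have "norm (kin_vol y / y) \<le> 3 * sqrt (3 * \<bar>y\<bar>)" if "\<bar>y\<bar> < 1" for y
      proof (cases "y > 0")
        case True
        have a: "y * (2 + y) \<le> 3 * y" using True that by simp
        have "kin_vol y = (y * (2 + y)) * sqrt (y * (2 + y))"
          using True by (simp add: kin_vol_eq max_def)
        also have "\<dots> \<le> (3 * y) * sqrt (3 * y)"
          by (rule mult_mono[OF a real_sqrt_le_mono[OF a]]) (use True in auto)
        finally show ?thesis using True kin_vol_nonneg[of y] by (simp add: field_simps)
      qed (simp add: iffD2[OF kin_vol_eq_0_iff])
      then show "\<forall>\<^sub>F y in at 0. norm (kin_vol y / y) \<le> 3 * sqrt (3 * \<bar>y\<bar>)"
        unfolding eventually_at by (intro exI[of _ 1]) auto
      show "((\<lambda>y. 3 * sqrt (3 * \<bar>y\<bar>)) \<longlongrightarrow> 0) (at 0)"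
        by (auto intro!: tendsto_eq_intros)
    qed
    then show ?thesis
      using 3 by (simp add: has_field_derivative_iff kin_vol_deriv_def iffD2[OF kin_vol_eq_0_iff])
  qed
qed

lemma continuous_on_kin_vol: "continuous_on UNIV kin_vol"
  using kin_vol_has_real_derivative DERIV_isCont continuous_at_imp_continuous_on by blast

lemma kin_vol_borel [measurable]: "kin_vol \<in> borel_measurable borel"
  using continuous_on_kin_vol by (rule borel_measurable_continuous_onI)

lemma kin_vol_deriv_borel [measurable]: "kin_vol_deriv \<in> borel_measurable borel"
  using continuous_on_kin_vol_deriv by (rule borel_measurable_continuous_onI)

lemma kin_vol_diff_le: "s \<le> t \<Longrightarrow> kin_vol t - kin_vol s \<le> (t - s) * kin_vol_deriv t"
proof (cases "s = t")
  case False
  assume "s \<le> t"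
  with False have "s < t" by simp
  then obtain z where "s < z" "z < t" "kin_vol t - kin_vol s = (t - s) * kin_vol_deriv z"
    using MVT2[of s t kin_vol kin_vol_deriv] kin_vol_has_real_derivative by blast
  then show ?thesis using kin_vol_deriv_mono[of z t] by (simp add: mult_left_mono)
qed simp

lemma kin_vol_diff_quotient_le:
  assumes "y \<le> c" "e \<le> c"
  shows "\<bar>(kin_vol (y - p) - kin_vol (e - p)) / (y - e)\<bar> \<le> kin_vol_deriv (c - p)"
proof -
  have *: "\<bar>(kin_vol (b - p) - kin_vol (a - p)) / (b - a)\<bar> \<le> kin_vol_deriv (c - p)"
    if "a < b" "b \<le> c" for a b
  proof -
    have "kin_vol (b - p) - kin_vol (a - p) \<le> (b - a) * kin_vol_deriv (b - p)"
      using kin_vol_diff_le[of "a - p" "b - p"] that by simp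
    also have "\<dots> \<le> (b - a) * kin_vol_deriv (c - p)"
      using that by (intro mult_left_mono kin_vol_deriv_mono) auto
    finally have "kin_vol (b - p) - kin_vol (a - p) \<le> (b - a) * kin_vol_deriv (c - p)" .
    moreover have "kin_vol (a - p) \<le> kin_vol (b - p)" using that by (intro kin_vol_mono) simp
    ultimately show ?thesis using that by (simp add: divide_le_eq mult.commute)
  qed
  consider "e < y" | "y < e" | "y = e" by linarith
  then show ?thesis
  proof cases
    case 2
    have "(kin_vol (y - p) - kin_vol (e - p)) / (y - e) = (kin_vol (e - p) - kin_vol (y - p)) / (e - y)"
      by (simp add: divide_simps) (simp add: algebra_simps)
    then show ?thesis using *[OF 2 assms(2)] by simp
  qed (use * assms kin_vol_deriv_nonneg in auto)
qed

lemma one_plus_power_le_powr: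
  fixes d u q :: real and k :: nat
  assumes d: "0 < d" and du: "d \<le> u" and kq: "real k \<le> q"
  shows "(1 + u) ^ k \<le> (1 + 1 / d) ^ k * (u powr q / d powr (q - k))"
proof -
  have u: "u > 0" using d du by simp
  have "1 + u \<le> (1 + 1 / d) * u"
    using d du by (simp add: field_simps)
  then have "(1 + u) ^ k \<le> ((1 + 1 / d) * u) ^ k" by (rule power_mono) (use u in simp)
  also have "\<dots> = (1 + 1 / d) ^ k * u ^ k" by (simp add: power_mult_distrib)
  also have "u ^ k \<le> u powr q / d powr (q - k)"
  proof -
    have "u ^ k * d powr (q - k) \<le> u ^ k * u powr (q - k)"
      using d du kq by (intro mult_left_mono powr_mono2) auto
    also have "\<dots> = u powr q" using u by (simp add: powr_realpow[symmetric] powr_add[symmetric])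
    finally show ?thesis using d by (simp add: field_simps)
  qed
  then have "(1 + 1 / d) ^ k * u ^ k \<le> (1 + 1 / d) ^ k * (u powr q / d powr (q - k))"
    using d by (intro mult_left_mono) auto
  finally show ?thesis .
qed

lemma one_plus_cube_le: "(x::real) \<ge> 0 \<Longrightarrow> (1 + x) ^ 3 \<le> 4 * (1 + x ^ 3)"
proof -
  assume x: "x \<ge> 0"
  have "(1 + x) ^ 3 = 4 * (1 + x ^ 3) - 3 * ((1 - x)\<^sup>2 * (1 + x))"
    by (simp add: power3_eq_cube power2_eq_square algebra_simps)
  moreover have "0 \<le> (1 - x)\<^sup>2 * (1 + x)" using x by simp
  ultimately show ?thesis by linarith
qed

lemma kin_vol_le_cube:
  assumes "u \<ge> 0"
  shows "kin_vol u \<le> (1 + u) ^ 3"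
proof -
  have a: "u * (2 + u) \<le> (1 + u)\<^sup>2" by (simp add: power2_eq_square algebra_simps)
  have "kin_vol u = u * (2 + u) * sqrt (u * (2 + u))"
    using assms by (simp add: kin_vol_eq max_def)
  also have "\<dots> \<le> (1 + u)\<^sup>2 * (1 + u)"
    using assms real_sqrt_le_mono[OF a] by (intro mult_mono a) auto
  finally show ?thesis by (simp add: power2_eq_square power3_eq_cube)
qed

lemma kin_vol_deriv_le_square:
  assumes "u \<ge> 0"
  shows "kin_vol_deriv u \<le> 3 * (1 + u)\<^sup>2"
proof -
  have "u * (2 + u) \<le> (1 + u)\<^sup>2" by (simp add: power2_eq_square algebra_simps)
  then have "sqrt (u * (2 + u)) \<le> 1 + u" using assms real_sqrt_le_mono by fastforce
  then show ?thesis
    using assms by (simp add: kin_vol_deriv_def max_def power2_eq_square mult_right_mono)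
qed

lemma kin_vol_le_powr:
  assumes e: "e < 0" and p: "p \<le> 0" and q: "q \<ge> 3"
  shows "kin_vol (e - p) \<le> 4 * (1 + 1 / \<bar>e\<bar> ^ 3) / \<bar>e\<bar> powr (q - 3) * \<bar>p\<bar> powr q"
proof (cases "e - p \<le> 0")
  case False
  then have u: "0 \<le> -p" "\<bar>e\<bar> \<le> -p" using e by auto
  have "kin_vol (e - p) \<le> (1 + (- p)) ^ 3"
    using kin_vol_mono[of "e - p" "- p"] kin_vol_le_cube[OF u(1)] e by simp
  also have "\<dots> \<le> (1 + 1 / \<bar>e\<bar>) ^ 3 * ((- p) powr q / \<bar>e\<bar> powr (q - 3))"
    using one_plus_power_le_powr[of "\<bar>e\<bar>" "- p" 3 q] e u q by simp
  also have "\<dots> \<le> 4 * (1 + (1 / \<bar>e\<bar>) ^ 3) * ((- p) powr q / \<bar>e\<bar> powr (q - 3))"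
    using e by (intro mult_right_mono one_plus_cube_le) auto
  finally show ?thesis using p by (simp add: power_divide)
qed (simp add: iffD2[OF kin_vol_eq_0_iff])

lemma kin_vol_deriv_le_powr:
  assumes e: "e < 0" and p: "p \<le> 0" and q: "q \<ge> 2"
  shows "kin_vol_deriv (e - p) \<le> 3 * (1 + 1 / \<bar>e\<bar>)\<^sup>2 / \<bar>e\<bar> powr (q - 2) * \<bar>p\<bar> powr q"
proof (cases "e - p \<le> 0")
  case False
  then have u: "0 \<le> -p" "\<bar>e\<bar> \<le> -p" using e by auto
  have "kin_vol_deriv (e - p) \<le> 3 * (1 + (- p))\<^sup>2"
    using kin_vol_deriv_mono[of "e - p" "- p"] kin_vol_deriv_le_square[OF u(1)] e by simp
  also have "\<dots> \<le> 3 * ((1 + 1 / \<bar>e\<bar>)\<^sup>2 * ((- p) powr q / \<bar>e\<bar> powr (q - 2)))"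
    using one_plus_power_le_powr[of "\<bar>e\<bar>" "- p" 2 q] e u q by simp
  finally show ?thesis using p by simp
qed (simp add: kin_vol_deriv_def max_def)

lemma sqrt_one_plus_square_less_iff:
  fixes n t :: real
  assumes n: "n \<ge> 0"
  shows "sqrt (1 + n\<^sup>2) < 1 + t \<longleftrightarrow> n < sqrt (max 0 ((max 0 (1 + t))\<^sup>2 - 1))"
proof
  assume h: "sqrt (1 + n\<^sup>2) < 1 + t"
  have s1: "sqrt (1 + n\<^sup>2) \<ge> 1" by simp
  then have t: "1 + t > 0" using h by linarith
  have "sqrt (1 + n\<^sup>2) ^ 2 < (1 + t)\<^sup>2"
    using h s1 by (intro power_strict_mono) auto
  then have "n\<^sup>2 < max 0 ((max 0 (1 + t))\<^sup>2 - 1)" using t by simp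
  then show "n < sqrt (max 0 ((max 0 (1 + t))\<^sup>2 - 1))" by (rule real_less_rsqrt)
next
  assume h: "n < sqrt (max 0 ((max 0 (1 + t))\<^sup>2 - 1))"
  have "n\<^sup>2 < sqrt (max 0 ((max 0 (1 + t))\<^sup>2 - 1)) ^ 2"
    using h n by (intro power_strict_mono) auto
  then have lt: "1 + n\<^sup>2 < (max 0 (1 + t))\<^sup>2"
    by (simp add: max_def split: if_splits)
  have "max 0 (1 + t) \<noteq> 0"
  proof
    assume "max 0 (1 + t) = 0"
    with lt have "1 + n\<^sup>2 < 0" by simp
    then show False by (metis add_pos_nonneg not_less_iff_gr_or_eq zero_le_power2 zero_less_one)
  qed
  then have t: "1 + t > 0" "1 + n\<^sup>2 < (1 + t)\<^sup>2"
    using lt by (auto simp: max_def split: if_splits)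
  then have "sqrt (1 + n\<^sup>2) < sqrt ((1 + t)\<^sup>2)" by (simp only: real_sqrt_less_iff)
  then show "sqrt (1 + n\<^sup>2) < 1 + t" using t by simp
qed

lemma emeasure_ball_R3: "r \<ge> 0 \<Longrightarrow> emeasure lborel (ball (0::R3) r) = ennreal (4 * pi / 3 * r ^ 3)"
  using emeasure_ball[of r "0::R3"] by (simp add: unit_ball_vol_3)

lemma emeasure_Times_R3:
  fixes A B :: "R3 set"
  assumes "A \<in> sets lborel" "B \<in> sets lborel"
  shows "emeasure lborel (A \<times> B) = emeasure lborel A * emeasure lborel B"
  using lborel.emeasure_pair_measure_Times[OF assms] by (simp only: lborel_prod)

lemma integral_dominated_convergence_at_within:
  fixes s :: "real \<Rightarrow> 'a \<Rightarrow> real" and w f :: "'a \<Rightarrow> real"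
  assumes sm: "\<And>t. t \<in> S \<Longrightarrow> s t \<in> borel_measurable M"
    and fm: "f \<in> borel_measurable M" and wi: "integrable M w"
    and lim: "\<And>x. x \<in> space M \<Longrightarrow> ((\<lambda>t. s t x) \<longlongrightarrow> f x) (at t0 within S)"
    and bnd: "\<And>t x. t \<in> S \<Longrightarrow> x \<in> space M \<Longrightarrow> \<bar>s t x\<bar> \<le> w x"
  shows "((\<lambda>t. integral\<^sup>L M (s t)) \<longlongrightarrow> integral\<^sup>L M f) (at t0 within S)"
  unfolding tendsto_at_iff_sequentially
proof (intro allI impI)
  fix X :: "nat \<Rightarrow> real"
  assume X: "\<forall>i. X i \<in> S - {t0}" and Xl: "X \<longlonglongrightarrow> t0"
  show "((\<lambda>t. integral\<^sup>L M (s t)) \<circ> X) \<longlonglongrightarrow> integral\<^sup>L M f"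
    unfolding o_def
  proof (rule integral_dominated_convergence[where w=w])
    show "AE x in M. (\<lambda>i. s (X i) x) \<longlonglongrightarrow> f x"
      using lim X Xl unfolding tendsto_at_iff_sequentially o_def by (intro AE_I2) blast
  qed (use fm wi X sm bnd in auto)
qed

lemma C1_differentiable_on_inv_into:
  fixes f f' :: "real \<Rightarrow> real"
  assumes S: "open S" and T: "open T" and bij: "bij_betw f S T"
    and der: "\<And>x. x \<in> S \<Longrightarrow> (f has_real_derivative f' x) (at x)"
    and cont: "continuous_on S f'" and nz: "\<And>x. x \<in> S \<Longrightarrow> f' x \<noteq> 0"
  shows "inv_into S f C1_differentiable_on T"
proof -
  define g where "g = inv_into S f"
  have gT: "g y \<in> S" and fg: "f (g y) = y" if "y \<in> T" for y
    using that bij by (auto simp: g_def bij_betw_def inv_into_into f_inv_into_f)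
  have gf: "g (f x) = x" if "x \<in> S" for x
    using that bij by (simp add: g_def bij_betw_def)
  have g_cont: "isCont g y" if y: "y \<in> T" for y
  proof -
    obtain d where d: "d > 0" "cball (g y) d \<subseteq> S"
      using S gT[OF y] open_contains_cball by blast
    have inS: "z \<in> S" if "\<bar>z - g y\<bar> \<le> d" for z
      using d(2) that by (auto simp: dist_real_def abs_minus_commute)
    have "isCont g (f (g y))"
      by (rule isCont_inverse_function[OF d(1)]) (use inS gf der DERIV_isCont in blast)+
    then show ?thesis using fg[OF y] by simp
  qed
  have g_der: "(g has_real_derivative inverse (f' (g y))) (at y)" if y: "y \<in> T" for y
  proof -
    obtain r where r: "r > 0" "ball y r \<subseteq> T" using T y openE by blast
    show ?thesis
    proof (rule DERIV_inverse_function[where a="y - r" and b="y + r"])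
      show "f (g z) = z" if "y - r < z" "z < y + r" for z
        using fg r(2) that by (auto simp: dist_real_def abs_if subset_iff)
    qed (use der gT nz y r g_cont in auto)
  qed
  have g'_cont: "continuous_on T (\<lambda>y. inverse (f' (g y)))"
  proof (intro continuous_on_inverse continuous_on_compose2[OF cont])
    show "continuous_on T g" by (rule continuous_at_imp_continuous_on) (use g_cont in blast)
  qed (use gT nz in auto)
  show ?thesis
    unfolding C1_differentiable_on_def g_def[symmetric]
    using g_der g'_cont
    by (intro exI[of _ "\<lambda>y. inverse (f' (g y))"]) (auto simp: has_real_derivative_iff_has_vector_derivative)
qed

lemma AE_ge_iff_ess_inf_ge:
  assumes [measurable]: "\<phi> \<in> borel_measurable lborel"
  shows "(AE x in lborel. e \<le> \<phi> x) \<longleftrightarrow> ereal e \<le> ess_inf \<phi>"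
proof -
  have "ereal e \<le> ess_inf \<phi> \<longleftrightarrow> esssup lborel (\<lambda>x. ereal (- \<phi> x)) \<le> ereal (- e)"
    unfolding ess_inf_def by (metis ereal_minus_le_minus ereal_uminus_uminus uminus_ereal.simps(1))
  also have "\<dots> \<longleftrightarrow> (AE x in lborel. ereal (- \<phi> x) \<le> ereal (- e))"
  proof
    assume le: "esssup lborel (\<lambda>x. ereal (- \<phi> x)) \<le> ereal (- e)"
    show "AE x in lborel. ereal (- \<phi> x) \<le> ereal (- e)"
      using esssup_AE[of "\<lambda>x. ereal (- \<phi> x)" lborel]
      by (rule eventually_mono) (rule order_trans[OF _ le])
  qed (rule esssup_I; measurable)
  finally show ?thesis by simp
qed

lemma le_powr_inverse:
  fixes d a y :: real
  assumes "d > 0" "a > 0" "d powr a \<le> y"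
  shows "d \<le> y powr (1 / a)"
proof -
  have "d = (d powr a) powr (1 / a)" using assms by (simp add: powr_powr)
  also have "\<dots> \<le> y powr (1 / a)" using assms by (intro powr_mono2) auto
  finally show ?thesis .
qed

lemma le_of_powr_mass_bound:
  fixes d s C L q :: real
  assumes d: "d > 0" and s: "s > 0" and C: "C > 0" and q: "q > 3" and L: "L \<ge> 0"
    and bound: "s \<le> C / d powr (q - 3) * (1 + 1 / d ^ 3) * L powr q"
  shows "d \<le> max ((2 * C) powr (1 / (q - 3))) ((2 * C) powr (1 / q)) *
               (L powr (q / (q - 3)) / s powr (1 / (q - 3)) + L / s powr (1 / q))"
proof -
  define K where "K = max ((2 * C) powr (1 / (q - 3))) ((2 * C) powr (1 / q))"
  define T1 where "T1 = L powr (q / (q - 3)) / s powr (1 / (q - 3))"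
  define T2 where "T2 = L / s powr (1 / q)"
  have T: "T1 \<ge> 0" "T2 \<ge> 0" using L by (simp_all add: T1_def T2_def)
  have root: "d \<le> (2 * C) powr (1 / a) * (L powr q) powr (1 / a) / s powr (1 / a)"
    if a: "a > 0" and half: "s / 2 \<le> C * L powr q / d powr a" for a
  proof -
    have "d powr a \<le> 2 * C * L powr q / s" using half s d by (simp add: field_simps)
    then have "d \<le> (2 * C * L powr q / s) powr (1 / a)" by (rule le_powr_inverse[OF d a])
    then show ?thesis using C by (simp add: powr_mult powr_divide)
  qed
  \<comment> \<open>One of the two terms of the bound is at least s/2.\<close>
  have "d powr q = d powr ((q - 3) + 3)" by simp
  also have "\<dots> = d powr (q - 3) * d powr 3" by (rule powr_add)
  also have "d powr (3::real) = d ^ 3" using powr_realpow[OF d, of 3] by simp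
  finally have "d powr q = d powr (q - 3) * d ^ 3" .
  then have "C / d powr (q - 3) * (1 + 1 / d ^ 3) * L powr q
      = C * L powr q / d powr (q - 3) + C * L powr q / d powr q"
    using d by (simp add: divide_simps) (simp add: algebra_simps)
  then have "s \<le> C * L powr q / d powr (q - 3) + C * L powr q / d powr q"
    using bound by simp
  then consider "s / 2 \<le> C * L powr q / d powr (q - 3)" | "s / 2 \<le> C * L powr q / d powr q"
    by linarith
  then have "d \<le> K * T1 \<or> d \<le> K * T2"
  proof cases
    case 1
    have "d \<le> (2 * C) powr (1 / (q - 3)) * T1"
      using root[OF _ 1] q by (simp add: T1_def powr_powr)
    also have "\<dots> \<le> K * T1" using T by (intro mult_right_mono) (auto simp: K_def)
    finally show ?thesis ..
  next
    case 2
    have "d \<le> (2 * C) powr (1 / q) * T2"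
      using root[OF _ 2] q L by (simp add: T2_def powr_powr)
    also have "\<dots> \<le> K * T2" using T by (intro mult_right_mono) (auto simp: K_def)
    finally show ?thesis ..
  qed
  moreover have "K \<ge> 0" by (simp add: K_def le_max_iff_disj)
  then have "K * T1 \<le> K * (T1 + T2)" "K * T2 \<le> K * (T1 + T2)"
    using T by (simp_all add: mult_left_mono)
  ultimately show ?thesis
    unfolding K_def[symmetric] T1_def[symmetric] T2_def[symmetric] by linarith
qed

locale Lq_potential =
  fixes \<phi> :: "R3 \<Rightarrow> real" and q :: real
  assumes borel_phi [measurable]: "\<phi> \<in> borel_measurable lborel"
    and phi_nonpos: "\<And>x. \<phi> x \<le> 0"
    and integrable_phi_powr: "integrable lborel (\<lambda>x. \<bar>\<phi> x\<bar> powr q)"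
    and q_gt_3: "q > 3"
begin

definition kin_int :: "real \<Rightarrow> real" where
  "kin_int e = (\<integral>x. kin_vol (e - \<phi> x) \<partial>lborel)"

definition kin_int_deriv :: "real \<Rightarrow> real" where
  "kin_int_deriv e = (\<integral>x. kin_vol_deriv (e - \<phi> x) \<partial>lborel)"

abbreviation energies :: "real set" where
  "energies \<equiv> {e. ess_inf \<phi> < ereal e \<and> e < 0}"

lemma integrable_comp_if_le_powr:
  fixes g :: "real \<Rightarrow> real"
  assumes [measurable]: "g \<in> borel_measurable borel"
    and "\<And>t. g t \<ge> 0" and "\<And>x. g (e - \<phi> x) \<le> K * \<bar>\<phi> x\<bar> powr q"
  shows "integrable lborel (\<lambda>x. g (e - \<phi> x))"
proof (rule Bochner_Integration.integrable_bound)
  show "integrable lborel (\<lambda>x. K * \<bar>\<phi> x\<bar> powr q)"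
    using integrable_phi_powr by (rule integrable_mult_right)
  show "AE x in lborel. norm (g (e - \<phi> x)) \<le> norm (K * \<bar>\<phi> x\<bar> powr q)"
    using assms(2,3) by (intro AE_I2) (auto intro: order_trans[OF _ abs_ge_self])
qed measurable

lemma integrable_kin_vol: "e < 0 \<Longrightarrow> integrable lborel (\<lambda>x. kin_vol (e - \<phi> x))"
  using q_gt_3 by (intro integrable_comp_if_le_powr[OF kin_vol_borel kin_vol_nonneg
      kin_vol_le_powr[OF _ phi_nonpos]]) auto

lemma integrable_kin_vol_deriv: "e < 0 \<Longrightarrow> integrable lborel (\<lambda>x. kin_vol_deriv (e - \<phi> x))"
  using q_gt_3 by (intro integrable_comp_if_le_powr[OF kin_vol_deriv_borel kin_vol_deriv_nonneg
      kin_vol_deriv_le_powr[OF _ phi_nonpos]]) auto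

lemma Lp_norm_powr: "Lp_norm q \<phi> powr q = (\<integral>x. \<bar>\<phi> x\<bar> powr q \<partial>lborel)"
  using q_gt_3 by (simp add: Lp_norm_def powr_powr integral_nonneg_AE)

lemma kin_int_le:
  assumes e: "e < 0"
  shows "kin_int e \<le> 4 * (1 + 1 / \<bar>e\<bar> ^ 3) / \<bar>e\<bar> powr (q - 3) * Lp_norm q \<phi> powr q"
  unfolding kin_int_def Lp_norm_powr integral_mult_right_zero[symmetric]
  by (rule integral_mono[OF integrable_kin_vol[OF e] integrable_mult_right[OF integrable_phi_powr]])
     (use kin_vol_le_powr[OF e phi_nonpos] q_gt_3 in auto)

lemma kin_int_has_real_derivative:
  assumes e: "e < 0"
  shows "(kin_int has_real_derivative kin_int_deriv e) (at e)"
proof -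
  define S where "S = ball e (- e / 2)"
  have S: "e \<in> S" "open S" using e by (auto simp: S_def)
  have S_le: "y \<le> e / 2" if "y \<in> S" for y
    using that by (auto simp: S_def dist_real_def)
  define dq where "dq = (\<lambda>y x. (kin_vol (y - \<phi> x) - kin_vol (e - \<phi> x)) / (y - e))"
  \<comment> \<open>The difference quotients are dominated by kin_vol_deriv (e/2 - \<phi>), integrable since e/2 < 0.\<close>
  have lim: "((\<lambda>y. integral\<^sup>L lborel (dq y)) \<longlongrightarrow> kin_int_deriv e) (at e within S)"
    unfolding kin_int_deriv_def
  proof (rule integral_dominated_convergence_at_within[where w="\<lambda>x. kin_vol_deriv (e / 2 - \<phi> x)"])
    show "integrable lborel (\<lambda>x. kin_vol_deriv (e / 2 - \<phi> x))"
      using e by (intro integrable_kin_vol_deriv) simp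
    show "((\<lambda>y. dq y x) \<longlongrightarrow> kin_vol_deriv (e - \<phi> x)) (at e within S)" for x
    proof -
      have "((\<lambda>y. y - \<phi> x) has_real_derivative 1) (at e)"
        by (auto intro!: derivative_eq_intros)
      from DERIV_chain2[OF kin_vol_has_real_derivative this]
      have "((\<lambda>y. kin_vol (y - \<phi> x)) has_real_derivative kin_vol_deriv (e - \<phi> x)) (at e)"
        by simp
      then show ?thesis
        unfolding dq_def has_field_derivative_iff by (rule Lim_at_imp_Lim_at_within)
    qed
    show "\<bar>dq y x\<bar> \<le> kin_vol_deriv (e / 2 - \<phi> x)" if "y \<in> S" for y x
      unfolding dq_def using S_le[OF that] e by (intro kin_vol_diff_quotient_le) auto
  qed (auto simp: dq_def)
  have "integral\<^sup>L lborel (dq y) = (kin_int y - kin_int e) / (y - e)" if "y \<in> S" for y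
  proof -
    have "y < 0" using S_le[OF that] e by simp
    then show ?thesis
      unfolding dq_def kin_int_def
      by (simp add: Bochner_Integration.integral_diff[OF integrable_kin_vol integrable_kin_vol] e)
  qed
  then have "\<forall>\<^sub>F y in at e within S. integral\<^sup>L lborel (dq y) = (kin_int y - kin_int e) / (y - e)"
    by (auto simp: eventually_at_filter)
  with lim have "((\<lambda>y. (kin_int y - kin_int e) / (y - e)) \<longlongrightarrow> kin_int_deriv e) (at e within S)"
    by (simp add: tendsto_cong)
  then show ?thesis
    using at_within_open[OF S] by (simp add: has_field_derivative_iff)
qed

lemma isCont_kin_int_deriv:
  assumes e: "e < 0"
  shows "isCont kin_int_deriv e"
proof -
  define S where "S = ball e (- e / 2)"
  have S: "e \<in> S" "open S" using e by (auto simp: S_def)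
  have S_le: "y \<le> e / 2" if "y \<in> S" for y
    using that by (auto simp: S_def dist_real_def)
  have "(kin_int_deriv \<longlongrightarrow> kin_int_deriv e) (at e within S)"
    unfolding kin_int_deriv_def
  proof (rule integral_dominated_convergence_at_within[where w="\<lambda>x. kin_vol_deriv (e / 2 - \<phi> x)"])
    show "integrable lborel (\<lambda>x. kin_vol_deriv (e / 2 - \<phi> x))"
      using e by (intro integrable_kin_vol_deriv) simp
    show "((\<lambda>y. kin_vol_deriv (y - \<phi> x)) \<longlongrightarrow> kin_vol_deriv (e - \<phi> x)) (at e within S)" for x
    proof -
      have "isCont kin_vol_deriv (e - \<phi> x)"
        using continuous_on_kin_vol_deriv by (simp add: continuous_on_eq_continuous_at)
      then show ?thesis by (rule isCont_tendsto_compose) (intro tendsto_intros)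
    qed
    show "\<bar>kin_vol_deriv (y - \<phi> x)\<bar> \<le> kin_vol_deriv (e / 2 - \<phi> x)" if "y \<in> S" for y x
      using S_le[OF that] kin_vol_deriv_nonneg[of "y - \<phi> x"] by (simp add: kin_vol_deriv_mono)
  qed auto
  then show ?thesis using at_within_open[OF S] by (simp add: isCont_def)
qed

lemma integral_pos_iff_ess_inf_less:
  fixes g :: "real \<Rightarrow> real"
  assumes "integrable lborel (\<lambda>x. g (e - \<phi> x))"
    and "\<And>t. g t \<ge> 0" and "\<And>t. g t = 0 \<longleftrightarrow> t \<le> 0"
  shows "(\<integral>x. g (e - \<phi> x) \<partial>lborel) > 0 \<longleftrightarrow> ess_inf \<phi> < ereal e"
proof -
  have "(\<integral>x. g (e - \<phi> x) \<partial>lborel) = 0 \<longleftrightarrow> (AE x in lborel. g (e - \<phi> x) = 0)"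
    by (rule integral_nonneg_eq_0_iff_AE[OF assms(1)]) (simp add: assms(2))
  also have "\<dots> \<longleftrightarrow> ereal e \<le> ess_inf \<phi>"
    by (simp add: assms(3) AE_ge_iff_ess_inf_ge)
  moreover have "(\<integral>x. g (e - \<phi> x) \<partial>lborel) \<ge> 0"
    by (rule integral_nonneg_AE) (simp add: assms(2))
  ultimately show ?thesis by (auto simp: not_le)
qed

lemma kin_int_pos_iff: "e < 0 \<Longrightarrow> kin_int e > 0 \<longleftrightarrow> ess_inf \<phi> < ereal e"
  unfolding kin_int_def
  by (rule integral_pos_iff_ess_inf_less[OF integrable_kin_vol kin_vol_nonneg kin_vol_eq_0_iff])

lemma kin_int_deriv_pos_iff: "e < 0 \<Longrightarrow> kin_int_deriv e > 0 \<longleftrightarrow> ess_inf \<phi> < ereal e"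
  unfolding kin_int_deriv_def
  by (rule integral_pos_iff_ess_inf_less[OF integrable_kin_vol_deriv kin_vol_deriv_nonneg
        kin_vol_deriv_eq_0_iff])

lemma kin_int_deriv_nonneg: "kin_int_deriv e \<ge> 0"
  unfolding kin_int_deriv_def by (rule integral_nonneg_AE) (simp add: kin_vol_deriv_nonneg)

lemma sets_a_set: "a_set \<phi> e \<in> sets (lborel :: (R3 \<times> R3) measure)"
proof -
  have "a_set \<phi> e = {p \<in> space (lborel \<Otimes>\<^sub>M lborel). sqrt (1 + (norm (snd p))\<^sup>2) - 1 + \<phi> (fst p) < e}"
    by (auto simp: a_set_def space_pair_measure)
  also have "\<dots> \<in> sets (lborel \<Otimes>\<^sub>M lborel)" by measurable
  finally show ?thesis by (simp only: lborel_prod)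
qed

lemma Pair_vimage_a_set:
  "Pair x -` a_set \<phi> e = ball 0 (sqrt (max 0 ((max 0 (1 + (e - \<phi> x)))\<^sup>2 - 1)))"
proof (rule set_eqI)
  fix v :: R3
  have "sqrt (1 + (norm v)\<^sup>2) - 1 + \<phi> x < e \<longleftrightarrow> sqrt (1 + (norm v)\<^sup>2) < 1 + (e - \<phi> x)"
    by arith
  then show "v \<in> Pair x -` a_set \<phi> e \<longleftrightarrow> v \<in> ball 0 (sqrt (max 0 ((max 0 (1 + (e - \<phi> x)))\<^sup>2 - 1)))"
    by (simp add: a_set_def dist_norm sqrt_one_plus_square_less_iff)
qed

lemma emeasure_a_set:
  assumes e: "e < 0"
  shows "emeasure lborel (a_set \<phi> e) = ennreal (4 * pi / 3 * kin_int e)"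
proof -
  have "emeasure lborel (a_set \<phi> e) = emeasure (lborel \<Otimes>\<^sub>M lborel) (a_set \<phi> e)"
    by (simp only: lborel_prod)
  also have "\<dots> = (\<integral>\<^sup>+ x. emeasure lborel (Pair x -` a_set \<phi> e) \<partial>lborel)"
    using sets_a_set by (intro lborel.emeasure_pair_measure_alt) (simp only: lborel_prod)
  also have "\<dots> = (\<integral>\<^sup>+ x. ennreal (4 * pi / 3 * kin_vol (e - \<phi> x)) \<partial>lborel)"
    unfolding Pair_vimage_a_set kin_vol_eq_radius_cube by (simp add: emeasure_ball_R3)
  also have "\<dots> = ennreal (\<integral>x. 4 * pi / 3 * kin_vol (e - \<phi> x) \<partial>lborel)"
    by (rule nn_integral_eq_integral)
       (use integrable_mult_right[OF integrable_kin_vol[OF e], of "4 * pi / 3"] in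
        \<open>auto simp: kin_vol_nonneg\<close>)
  also have "\<dots> = ennreal (4 * pi / 3 * kin_int e)" by (simp add: kin_int_def)
  finally show ?thesis .
qed

lemma a_phi_eq: "e < 0 \<Longrightarrow> a_phi \<phi> e = 4 * pi / 3 * kin_int e"
  unfolding a_phi_def measure_def
  by (simp add: emeasure_a_set kin_int_def integral_nonneg_AE kin_vol_nonneg)

lemma a_phi_has_real_derivative:
  assumes e: "e < 0"
  shows "(a_phi \<phi> has_real_derivative 4 * pi / 3 * kin_int_deriv e) (at e)"
  using DERIV_cmult[OF kin_int_has_real_derivative[OF e], of "4 * pi / 3"]
  by (rule has_field_derivative_transform_within_open[where S="{..<0}"]) (use e a_phi_eq in auto)

lemma isCont_a_phi: "e < 0 \<Longrightarrow> isCont (a_phi \<phi>) e"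
  using a_phi_has_real_derivative DERIV_isCont by blast

lemma continuous_on_a_phi_deriv: "continuous_on {..<0} (\<lambda>e. 4 * pi / 3 * kin_int_deriv e)"
  by (intro continuous_at_imp_continuous_on ballI continuous_intros isCont_kin_int_deriv) simp

lemma a_phi_C1_differentiable_on: "a_phi \<phi> C1_differentiable_on {..<0}"
  unfolding C1_differentiable_on_def
  using a_phi_has_real_derivative continuous_on_a_phi_deriv
  by (intro exI[of _ "\<lambda>e. 4 * pi / 3 * kin_int_deriv e"])
     (auto simp: has_real_derivative_iff_has_vector_derivative)

lemma a_phi_mono:
  assumes "e1 \<le> e2" "e2 < 0"
  shows "a_phi \<phi> e1 \<le> a_phi \<phi> e2"
proof (rule DERIV_nonneg_imp_nondecreasing[OF assms(1)])
  fix x assume "e1 \<le> x" "x \<le> e2"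
  then have "x < 0" using assms by simp
  then show "\<exists>y. (a_phi \<phi> has_real_derivative y) (at x) \<and> 0 \<le> y"
    using a_phi_has_real_derivative kin_int_deriv_nonneg
    by (intro exI[of _ "4 * pi / 3 * kin_int_deriv x"]) auto
qed

lemma a_phi_strict_mono_on: "strict_mono_on energies (a_phi \<phi>)"
proof (rule strict_mono_onI)
  fix r s assume r: "r \<in> energies" and s: "s \<in> energies" and "r < s"
  show "a_phi \<phi> r < a_phi \<phi> s"
  proof (rule DERIV_pos_imp_increasing[OF \<open>r < s\<close>])
    fix x assume x: "r \<le> x" "x \<le> s"
    then have x0: "x < 0" and "ess_inf \<phi> < ereal x"
      using r s by (auto intro: less_le_trans)
    then have "4 * pi / 3 * kin_int_deriv x > 0" by (simp add: kin_int_deriv_pos_iff)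
    then show "\<exists>y. (a_phi \<phi> has_real_derivative y) (at x) \<and> 0 < y"
      using a_phi_has_real_derivative[OF x0] by blast
  qed
qed

lemma a_phi_pos_iff: "e < 0 \<Longrightarrow> a_phi \<phi> e > 0 \<longleftrightarrow> ess_inf \<phi> < ereal e"
  by (simp add: a_phi_eq kin_int_pos_iff zero_less_mult_iff)

lemma open_energies: "open energies"
proof -
  have "energies = {..<0} \<inter> (\<lambda>e. 4 * pi / 3 * kin_int_deriv e) -` {0<..}"
    by (auto simp: kin_int_deriv_pos_iff zero_less_mult_iff)
  then show ?thesis
    using continuous_open_preimage[OF continuous_on_a_phi_deriv open_lessThan open_greaterThan]
    by simp
qed

lemma a_phi_le:
  assumes e: "e < 0"
  shows "a_phi \<phi> e \<le> 16 * pi / 3 / \<bar>e\<bar> powr (q - 3) * (1 + 1 / \<bar>e\<bar> ^ 3) * Lp_norm q \<phi> powr q"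
proof -
  have "a_phi \<phi> e \<le> 4 * pi / 3 * (4 * (1 + 1 / \<bar>e\<bar> ^ 3) / \<bar>e\<bar> powr (q - 3) * Lp_norm q \<phi> powr q)"
    unfolding a_phi_eq[OF e] by (intro mult_left_mono kin_int_le e) simp
  then show ?thesis by (simp add: field_simps)
qed

lemma a_phi_small:
  assumes T: "T > 0"
  shows "\<exists>e<0. a_phi \<phi> e \<le> T"
proof -
  define N where "N = Lp_norm q \<phi> powr q"
  define d where "d = max 1 ((32 * pi / 3 * N / T) powr (1 / (q - 3)))"
  have d: "d \<ge> 1" by (simp add: d_def)
  have N: "N \<ge> 0" by (simp add: N_def)
  \<comment> \<open>For |e| \<ge> 1 the bound reads a_phi \<le> (32\<pi>/3) N / |e|^(q-3).\<close>
  have "32 * pi / 3 * N / T \<le> d powr (q - 3)"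
  proof -
    have "32 * pi / 3 * N / T = ((32 * pi / 3 * N / T) powr (1 / (q - 3))) powr (q - 3)"
      using q_gt_3 N T by (simp add: powr_powr)
    also have "\<dots> \<le> d powr (q - 3)" using q_gt_3 by (intro powr_mono2) (auto simp: d_def)
    finally show ?thesis .
  qed
  then have NT: "32 * pi / 3 * N / d powr (q - 3) \<le> T"
    using T d by (simp add: field_simps)
  have "a_phi \<phi> (- d) \<le> 16 * pi / 3 / d powr (q - 3) * (1 + 1 / d ^ 3) * N"
    using a_phi_le[of "- d"] d by (simp add: N_def)
  also have "\<dots> \<le> 16 * pi / 3 / d powr (q - 3) * 2 * N"
    using d N by (intro mult_right_mono mult_left_mono) (auto simp: power_le_one)
  also have "\<dots> \<le> T" using NT by (simp add: field_simps)
  finally show ?thesis using d by (intro exI[of _ "- d"]) simp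
qed

lemma ball_Times_ball_subset_a_set:
  assumes decay: "\<And>x. c \<le> (1 + norm x) * \<bar>\<phi> x\<bar>" and \<delta>: "\<delta> > 0"
  shows "ball 0 (c / (2 * \<delta>\<^sup>2) - 1) \<times> ball 0 \<delta> \<subseteq> a_set \<phi> (- \<delta>\<^sup>2)"
proof (clarsimp simp: a_set_def)
  fix x v :: R3
  assume x: "norm x < c / (2 * \<delta>\<^sup>2) - 1" and v: "norm v < \<delta>"
  have "(1 + norm x) * (2 * \<delta>\<^sup>2) < c" using x \<delta> by (simp add: field_simps)
  also have "\<dots> \<le> (1 + norm x) * \<bar>\<phi> x\<bar>" by (rule decay)
  finally have "2 * \<delta>\<^sup>2 < \<bar>\<phi> x\<bar>"
    by (simp only: mult_less_cancel_left_pos[OF add_pos_nonneg[OF zero_less_one norm_ge_zero]])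
  then have "\<phi> x < - 2 * \<delta>\<^sup>2" using phi_nonpos[of x] by simp
  moreover have "sqrt (1 + (norm v)\<^sup>2) \<le> 1 + (norm v)\<^sup>2 / 2"
    by (rule real_le_lsqrt) (auto simp: power2_eq_square algebra_simps)
  moreover have "(norm v)\<^sup>2 < \<delta>\<^sup>2" using v by (simp add: power_strict_mono)
  moreover have "\<delta>\<^sup>2 > 0" using \<delta> by simp
  ultimately show "sqrt (1 + (norm v)\<^sup>2) - 1 + \<phi> x < - \<delta>\<^sup>2" by linarith
qed

lemma a_phi_ge:
  assumes c: "c > 0" and decay: "\<And>x. c \<le> (1 + norm x) * \<bar>\<phi> x\<bar>"
    and \<delta>: "\<delta> > 0" "4 * \<delta>\<^sup>2 \<le> c"
  shows "c ^ 3 / (64 * \<delta> ^ 3) \<le> a_phi \<phi> (- \<delta>\<^sup>2)"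
proof -
  define R where "R = c / (2 * \<delta>\<^sup>2) - 1"
  have R: "c / (4 * \<delta>\<^sup>2) \<le> R" using \<delta> by (simp add: R_def field_simps)
  have R0: "R \<ge> 0" using order_trans[OF _ R] c by simp
  have "ennreal (4 * pi / 3 * R ^ 3) * ennreal (4 * pi / 3 * \<delta> ^ 3)
      = emeasure lborel (ball (0::R3) R \<times> ball (0::R3) \<delta>)"
    using R0 \<delta> by (subst emeasure_Times_R3) (auto simp: emeasure_ball_R3)
  also have "\<dots> \<le> emeasure lborel (a_set \<phi> (- \<delta>\<^sup>2))"
    using sets_a_set ball_Times_ball_subset_a_set[OF decay \<delta>(1)]
    by (intro emeasure_mono) (simp_all add: R_def)
  also have "\<dots> = ennreal (a_phi \<phi> (- \<delta>\<^sup>2))"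
    using \<delta> by (simp add: emeasure_a_set a_phi_eq)
  also have "ennreal (4 * pi / 3 * R ^ 3) * ennreal (4 * pi / 3 * \<delta> ^ 3)
      = ennreal ((4 * pi / 3) * (4 * pi / 3) * (R ^ 3 * \<delta> ^ 3))"
    using R0 \<delta> by (simp add: ennreal_mult'[symmetric] mult_ac)
  finally have "(4 * pi / 3) * (4 * pi / 3) * (R ^ 3 * \<delta> ^ 3) \<le> a_phi \<phi> (- \<delta>\<^sup>2)"
    by (simp add: ennreal_le_iff a_phi_def)
  moreover have "c ^ 3 / (64 * \<delta> ^ 3) \<le> R ^ 3 * \<delta> ^ 3"
  proof -
    have "c ^ 3 / (64 * \<delta> ^ 3) = (c / (4 * \<delta>\<^sup>2)) ^ 3 * \<delta> ^ 3"
      using \<delta> by (simp add: field_simps power2_eq_square power3_eq_cube)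
    also have "\<dots> \<le> R ^ 3 * \<delta> ^ 3"
      using R c \<delta> by (intro mult_right_mono power_mono) auto
    finally show ?thesis .
  qed
  moreover have "R ^ 3 * \<delta> ^ 3 \<le> (4 * pi / 3) * (4 * pi / 3) * (R ^ 3 * \<delta> ^ 3)"
  proof -
    have "1 * 1 \<le> (4 * pi / 3) * (4 * pi / (3::real))"
      using pi_gt3 by (intro mult_mono) auto
    then have "1 * 1 * (R ^ 3 * \<delta> ^ 3) \<le> (4 * pi / 3) * (4 * pi / 3) * (R ^ 3 * \<delta> ^ 3)"
      by (rule mult_right_mono) (use R0 \<delta> in simp)
    then show ?thesis by (simp only: mult_1)
  qed
  ultimately show ?thesis by linarith
qed

lemma a_phi_unbounded:
  assumes c: "c > 0" and decay: "\<And>x. c \<le> (1 + norm x) * \<bar>\<phi> x\<bar>" and T: "T > 0"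
  shows "\<exists>e<0. T < a_phi \<phi> e"
proof -
  define \<delta> where "\<delta> = min 1 (min (sqrt (c / 4)) (c ^ 3 / (128 * (T + 1))))"
  have \<delta>: "0 < \<delta>" "\<delta> \<le> 1" "\<delta> \<le> sqrt (c / 4)" "\<delta> \<le> c ^ 3 / (128 * (T + 1))"
    using c T by (auto simp: \<delta>_def)
  have "\<delta>\<^sup>2 \<le> sqrt (c / 4) ^ 2" using \<delta> by (intro power_mono) auto
  then have "4 * \<delta>\<^sup>2 \<le> c" using c by simp
  have "T < 2 * (T + 1)" using T by simp
  also have "\<dots> \<le> c ^ 3 / (64 * \<delta>)"
    using \<delta>(1,4) T by (simp add: field_simps)
  also have "\<dots> \<le> c ^ 3 / (64 * \<delta> ^ 3)"
    using power_decreasing[of 1 3 \<delta>] \<delta>(1,2) c by (intro divide_left_mono) auto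
  also have "\<dots> \<le> a_phi \<phi> (- \<delta>\<^sup>2)"
    by (rule a_phi_ge[OF c decay \<delta>(1) \<open>4 * \<delta>\<^sup>2 \<le> c\<close>])
  finally show ?thesis using \<delta> by (intro exI[of _ "- \<delta>\<^sup>2"]) simp
qed

lemma a_phi_bij_betw:
  assumes c: "c > 0" and decay: "\<And>x. c \<le> (1 + norm x) * \<bar>\<phi> x\<bar>"
  shows "bij_betw (a_phi \<phi>) energies {0<..}"
  unfolding bij_betw_def
proof (intro conjI strict_mono_on_imp_inj_on[OF a_phi_strict_mono_on] subset_antisym subsetI)
  show "s \<in> {0<..}" if "s \<in> a_phi \<phi> ` energies" for s
    using that a_phi_pos_iff by auto
  fix s :: real assume "s \<in> {0<..}"
  then have s: "s > 0" by simp
  obtain e1 where e1: "e1 < 0" "a_phi \<phi> e1 \<le> s" using a_phi_small[OF s] by blast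
  obtain e2 where e2: "e2 < 0" "s < a_phi \<phi> e2" using a_phi_unbounded[OF c decay s] by blast
  have "e1 \<le> e2" using a_phi_mono[of e2 e1] e1 e2 by fastforce
  moreover have "continuous_on {e1..e2} (a_phi \<phi>)"
    using e2(1) by (intro continuous_at_imp_continuous_on ballI isCont_a_phi) auto
  ultimately obtain e where e: "e1 \<le> e" "e \<le> e2" "a_phi \<phi> e = s"
    using IVT'[of "a_phi \<phi>" e1 s e2] e1 e2 by auto
  then have "e \<in> energies" using e2(1) s a_phi_pos_iff[of e] by auto
  with e(3) show "s \<in> a_phi \<phi> ` energies" by blast
qed

lemma a_phi_inverse_C1_differentiable_on:
  assumes c: "c > 0" and decay: "\<And>x. c \<le> (1 + norm x) * \<bar>\<phi> x\<bar>"
  shows "inv_into energies (a_phi \<phi>) C1_differentiable_on {0<..}"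
proof (rule C1_differentiable_on_inv_into[OF open_energies open_greaterThan a_phi_bij_betw[OF c decay]])
  show "(a_phi \<phi> has_real_derivative 4 * pi / 3 * kin_int_deriv e) (at e)" if "e \<in> energies" for e
    using that by (intro a_phi_has_real_derivative) simp
  show "continuous_on energies (\<lambda>e. 4 * pi / 3 * kin_int_deriv e)"
    by (rule continuous_on_subset[OF continuous_on_a_phi_deriv]) auto
  show "4 * pi / 3 * kin_int_deriv e \<noteq> 0" if "e \<in> energies" for e
    using that kin_int_deriv_pos_iff[of e] by auto
qed

lemma a_phi_inverse_ge:
  assumes c: "c > 0" and decay: "\<And>x. c \<le> (1 + norm x) * \<bar>\<phi> x\<bar>" and s: "s > 0"
  shows "inv_into energies (a_phi \<phi>) s \<ge>
    - max ((2 * (16 * pi / 3)) powr (1 / (q - 3))) ((2 * (16 * pi / 3)) powr (1 / q)) *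
      (Lp_norm q \<phi> powr (q / (q - 3)) / s powr (1 / (q - 3)) + Lp_norm q \<phi> / s powr (1 / q))"
proof -
  define e where "e = inv_into energies (a_phi \<phi>) s"
  have "a_phi \<phi> ` energies = {0<..}"
    using a_phi_bij_betw[OF c decay] by (simp add: bij_betw_def)
  then have e: "e \<in> energies" "a_phi \<phi> e = s"
    unfolding e_def using s by (metis greaterThan_iff inv_into_into, metis greaterThan_iff f_inv_into_f)
  then have "s \<le> 16 * pi / 3 / (- e) powr (q - 3) * (1 + 1 / (- e) ^ 3) * Lp_norm q \<phi> powr q"
    using a_phi_le[of e] by simp
  then have "- e \<le> max ((2 * (16 * pi / 3)) powr (1 / (q - 3))) ((2 * (16 * pi / 3)) powr (1 / q)) *
      (Lp_norm q \<phi> powr (q / (q - 3)) / s powr (1 / (q - 3)) + Lp_norm q \<phi> / s powr (1 / q))"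
    using e s q_gt_3 by (intro le_of_powr_mass_bound) (auto simp: Lp_norm_def)
  then show ?thesis by (simp add: e_def)
qed

end

lemma m_inf_le: "m_inf \<phi> \<le> (1 + norm x) * \<bar>\<phi> x\<bar>"
  unfolding m_inf_def by (rule cINF_lower) (auto intro: bdd_belowI2[where m=0])

lemma kin_vol_integrand:
  "(max 0 ((max 0 (1 + e - \<phi> x))\<^sup>2 - 1)) powr (3/2) = kin_vol (e - \<phi> x)"
  by (simp add: kin_vol_def add_diff_eq)

theorem lemmaA1:
  fixes q :: real
  assumes "q > 3"
  shows "(\<forall>\<phi>\<in>Phi_q q.
            (\<forall>e<0. emeasure lborel (a_set \<phi> e) < \<infinity> \<and>
                   integrable lborel (\<lambda>x. (max 0 ((max 0 (1 + e - \<phi> x))\<^sup>2 - 1)) powr (3/2)) \<and>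
                   a_phi \<phi> e = 4 * pi / 3 *
                     (\<integral>x. (max 0 ((max 0 (1 + e - \<phi> x))\<^sup>2 - 1)) powr (3/2) \<partial>lborel)) \<and>
            (a_phi \<phi>) C1_differentiable_on {..<0} \<and>
            strict_mono_on {e. ess_inf \<phi> < ereal e \<and> e < 0} (a_phi \<phi>) \<and>
            bij_betw (a_phi \<phi>) {e. ess_inf \<phi> < ereal e \<and> e < 0} {0<..} \<and>
            (a_phi \<phi>) C1_differentiable_on {e. ess_inf \<phi> < ereal e \<and> e < 0} \<and>
            (inv_into {e. ess_inf \<phi> < ereal e \<and> e < 0} (a_phi \<phi>)) C1_differentiable_on {0<..})
       \<and> (\<exists>C Ct. C > 0 \<and> Ct > 0 \<and>
            (\<forall>\<phi>\<in>Phi_q q. \<forall>e<0. \<forall>s>0.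
               a_phi \<phi> e \<le> C / \<bar>e\<bar> powr (q - 3) * (1 + 1 / \<bar>e\<bar> ^ 3) * (Lp_norm q \<phi>) powr q \<and>
               inv_into {e. ess_inf \<phi> < ereal e \<and> e < 0} (a_phi \<phi>) s \<ge>
                 - Ct * ((Lp_norm q \<phi>) powr (q / (q - 3)) / s powr (1 / (q - 3))
                         + Lp_norm q \<phi> / s powr (1 / q))))"
proof -
  have potential: "Lq_potential \<phi> q" if "\<phi> \<in> Phi_q q" for \<phi>
    using that assms unfolding Phi_q_def in_Lp_def by unfold_locales auto
  have m_inf_pos: "0 < m_inf \<phi>" if "\<phi> \<in> Phi_q q" for \<phi>
    using that by (simp add: Phi_q_def)
  show ?thesis
    unfolding kin_vol_integrand
  proof (intro conjI ballI allI impI exI)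
    fix \<phi> e assume \<phi>: "\<phi> \<in> Phi_q q" and e: "e < (0::real)"
    interpret Lq_potential \<phi> q by (rule potential[OF \<phi>])
    show "emeasure lborel (a_set \<phi> e) < \<infinity>" by (simp add: emeasure_a_set[OF e])
    show "integrable lborel (\<lambda>x. kin_vol (e - \<phi> x))" by (rule integrable_kin_vol[OF e])
    show "a_phi \<phi> e = 4 * pi / 3 * (\<integral>x. kin_vol (e - \<phi> x) \<partial>lborel)"
      by (rule a_phi_eq[OF e, unfolded kin_int_def])
  next
    fix \<phi> assume \<phi>: "\<phi> \<in> Phi_q q"
    interpret Lq_potential \<phi> q by (rule potential[OF \<phi>])
    show "a_phi \<phi> C1_differentiable_on {..<0}" by (rule a_phi_C1_differentiable_on)
    show "strict_mono_on energies (a_phi \<phi>)" by (rule a_phi_strict_mono_on)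
    show "bij_betw (a_phi \<phi>) energies {0<..}" by (rule a_phi_bij_betw[OF m_inf_pos[OF \<phi>] m_inf_le])
    show "a_phi \<phi> C1_differentiable_on energies"
      by (rule C1_differentiable_on_subset[OF a_phi_C1_differentiable_on]) auto
    show "inv_into energies (a_phi \<phi>) C1_differentiable_on {0<..}"
      by (rule a_phi_inverse_C1_differentiable_on[OF m_inf_pos[OF \<phi>] m_inf_le])
  next
    show "16 * pi / 3 > (0::real)" by simp
    show "max ((2 * (16 * pi / 3)) powr (1 / (q - 3))) ((2 * (16 * pi / 3)) powr (1 / q)) > (0::real)"
      by (simp add: less_max_iff_disj)
    fix \<phi> e s assume \<phi>: "\<phi> \<in> Phi_q q" and e: "e < (0::real)" and s: "s > (0::real)"
    interpret Lq_potential \<phi> q by (rule potential[OF \<phi>])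
    show "a_phi \<phi> e \<le> 16 * pi / 3 / \<bar>e\<bar> powr (q - 3) * (1 + 1 / \<bar>e\<bar> ^ 3) * Lp_norm q \<phi> powr q"
      by (rule a_phi_le[OF e])
    show "inv_into energies (a_phi \<phi>) s \<ge>
        - max ((2 * (16 * pi / 3)) powr (1 / (q - 3))) ((2 * (16 * pi / 3)) powr (1 / q)) *
          (Lp_norm q \<phi> powr (q / (q - 3)) / s powr (1 / (q - 3)) + Lp_norm q \<phi> / s powr (1 / q))"
      by (rule a_phi_inverse_ge[OF m_inf_pos[OF \<phi>] m_inf_le s])
  qed
qed

end
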